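(* Let $A$ be a commutative algebra over a field with multiplication $\star$ satisfying the Tortken identity $$(a\star b)\star(c\star d)-(a\star d)\star(c\star b)=(a,b,c)\star d-(a,d,c)\star b\quad\text{for all }a,b,c,d\in A.$$ Then for all $a,b,c,x\in A$: $(a,b\star x,c)+(b,c\star x,a)+(c,a\star x,b)=0$.
   Context: The associator is $(a,b,c)=a\star(b\star c)-(a\star b)\star c$. *)

theory Defs
  imports Complex_Main
begin

definition bilinear_mult :: "('k::field \<Rightarrow> 'v::ab_group_add \<Rightarrow> 'v) \<Rightarrow> ('v \<Rightarrow> 'v \<Rightarrow> 'v) \<Rightarrow> bool" where
  "bilinear_mult sc m \<longleftrightarrow>
     (\<forall>a b c. m (a + b) c = m a c + m b c) \<and>
     (\<forall>a b c. m a (b + c) = m a b + m a c) \<and>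
     (\<forall>k a b. m (sc k a) b = sc k (m a b)) \<and>
     (\<forall>k a b. m a (sc k b) = sc k (m a b))"

definition assoc :: "('v \<Rightarrow> 'v \<Rightarrow> 'v) \<Rightarrow> 'v \<Rightarrow> 'v \<Rightarrow> 'v \<Rightarrow> 'v::ab_group_add" where
  "assoc m a b c = m a (m b c) - m (m a b) c"

end

theory Submission
  imports Defs
begin

text \<open>Instantiate the Tortken identity at \<open>(b, x, c, a)\<close> and sum cyclically over \<open>a, b, c\<close>.
  The left-hand sides cancel by commutativity, and the terms \<open>(b,a,c)\<star>x\<close> add up to
  \<open>((b,a,c) + (a,c,b) + (c,b,a))\<star>x = 0\<close>, because the cyclic sum of associators vanishes
  in every commutative algebra. What remains, the vanishing of the cyclic sum of \<open>(b,x,c)\<star>a\<close>,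
  is the negative of the claimed sum after rewriting with commutativity.\<close>

locale comm_nonassoc_ring =
  fixes m :: "'v::ab_group_add \<Rightarrow> 'v \<Rightarrow> 'v"
  assumes add_left: "m (a + b) c = m a c + m b c"
    and commute: "m a b = m b a"
begin

lemma add_right: "m a (b + c) = m a b + m a c"
  using add_left commute by metis

lemma zero_left [simp]: "m 0 b = 0"
  by (metis add_left add_cancel_right_right)

lemma diff_left: "m (a - b) c = m a c - m b c"
  by (metis add_left add_diff_cancel eq_diff_eq)

lemma diff_right: "m a (b - c) = m a b - m a c"
  by (metis add_right add_diff_cancel eq_diff_eq)

lemma assoc_cyclic_sum: "assoc m a b c + assoc m b c a + assoc m c a b = 0"
  unfolding assoc_def by (simp add: commute)

lemma cyclic_sum_assoc_middle_mult:
  "assoc m a (m b x) c + assoc m b (m c x) a + assoc m c (m a x) b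
     = - (m (assoc m b x c) a + m (assoc m c x a) b + m (assoc m a x b) c)"
  unfolding assoc_def by (simp add: diff_left diff_right commute algebra_simps)

end

locale tortken_ring = comm_nonassoc_ring +
  assumes tortken: "m (m a b) (m c d) - m (m a d) (m c b)
                      = m (assoc m a b c) d - m (assoc m a d c) b"
begin

lemma cyclic_sum_mult_assoc:
  "m (assoc m b x c) a + m (assoc m c x a) b + m (assoc m a x b) c = 0"
proof -
  have "(m (assoc m b x c) a - m (assoc m b a c) x) + (m (assoc m c x a) b - m (assoc m c b a) x)
      + (m (assoc m a x b) c - m (assoc m a c b) x)
      = (m (m b x) (m c a) - m (m b a) (m c x)) + (m (m c x) (m a b) - m (m c b) (m a x))
      + (m (m a x) (m b c) - m (m a c) (m b x))"
    by (simp only: tortken)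
  also have "\<dots> = 0"
    by (simp add: commute)
  finally have tortken_sum:
    "(m (assoc m b x c) a - m (assoc m b a c) x) + (m (assoc m c x a) b - m (assoc m c b a) x)
      + (m (assoc m a x b) c - m (assoc m a c b) x) = 0" .
  have "m (assoc m b a c) x + m (assoc m c b a) x + m (assoc m a c b) x
      = m (assoc m b a c + assoc m a c b + assoc m c b a) x"
    by (simp add: add_left algebra_simps)
  also have "\<dots> = 0"
    by (simp add: assoc_cyclic_sum commute)
  finally have "m (assoc m b a c) x + m (assoc m c b a) x + m (assoc m a c b) x = 0" .
  with tortken_sum show ?thesis
    by (simp add: algebra_simps)
qed

lemma cyclic_sum_assoc_middle_mult_eq_zero:
  "assoc m a (m b x) c + assoc m b (m c x) a + assoc m c (m a x) b = 0"
  using cyclic_sum_assoc_middle_mult cyclic_sum_mult_assoc by simp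

end

theorem mainTheorem5:
  fixes sc :: "'k::field \<Rightarrow> 'v::ab_group_add \<Rightarrow> 'v"
    and m :: "'v \<Rightarrow> 'v \<Rightarrow> 'v"
  assumes vs: "vector_space sc"
    and bil: "bilinear_mult sc m"
    and comm: "\<forall>a b. m a b = m b a"
    and tortken: "\<forall>a b c d. m (m a b) (m c d) - m (m a d) (m c b)
                     = m (assoc m a b c) d - m (assoc m a d c) b"
  shows "\<forall>a b c x. assoc m a (m b x) c + assoc m b (m c x) a + assoc m c (m a x) b = 0"
proof -
  interpret tortken_ring m
    using bil comm tortken by unfold_locales (auto simp: bilinear_mult_def)
  show ?thesis
    using cyclic_sum_assoc_middle_mult_eq_zero by blast
qed

end
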